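(* Let $m\ge 2$ and let $\mathcal{A}=\{\mathbf{A}^{(1)},\ldots,\mathbf{A}^{(m)}\}$ be POVMs on $\mathbb{C}^d$. Define $t_{\mathrm{PI}}=\max_{1\le l<l'\le m}\max\{t\in[0,1]:\{\Phi_t(\mathbf{A}^{(l)}),\Phi_t(\mathbf{A}^{(l')})\}\text{ is jointly measurable}\}$ and $t_{(m-1)\text{-POVM}}=\max\{t\in[0,1]:\Phi_t(\mathcal{A})\text{ is }\mathcal{B}\text{-simulable for some set }\mathcal{B}\text{ of at most }m-1\text{ POVMs on }\mathbb{C}^d\}$. Then $t_{\mathrm{PI}}\le t_{(m-1)\text{-POVM}}$.
   Context: A POVM on $\mathbb{C}^d$ with $n$ outcomes is a tuple $\mathbf{A}=(A_1,\ldots,A_n)$ of positive semidefinite operators with $\sum_a A_a=\mathbb{I}$. Given a set $\mathcal{B}=\{\mathbf{B}^{(j)}\}_j$ of POVMs, a POVM $\mathbf{A}$ with $n$ outcomes is $\mathcal{B}$-simulable if there are a probability distribution $p(j)$ over elements of $\mathcal{B}$ and conditional probability distributions $q(i|j,i')$ such that $A_i=\sum_j p(j)\sum_{i'}q(i|j,i')B^{(j)}_{i'}$ for all $i$; a set of POVMs is $\mathcal{B}$-simulable if each element is (distributions may depend on the element). The depolarising map is $\Phi_t(A)=tA+(1-t)\mathrm{Tr}(A)\mathbb{I}/d$, applied effectwise to POVMs and elementwise to sets. A pair $\{\mathbf{A},\mathbf{A}'\}$ is jointly measurable if there is a POVM $(M_{ab})$ with $\sum_b M_{ab}=A_a$,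 $\sum_a M_{ab}=A'_b$. *)

theory Defs
  imports "HOL-Analysis.Analysis"
begin

text \<open>Operators on C^d are d x d complex matrices, with d = CARD('d).
A POVM with n outcomes is a pair (n, E) with effects E a for a < n.\<close>

type_synonym 'd cmat = "complex^'d^'d"
type_synonym 'd povm_data = "nat \<times> (nat \<Rightarrow> 'd cmat)"

definition psd :: "'d::finite cmat \<Rightarrow> bool" where
  "psd A \<longleftrightarrow> (\<forall>i j. A$i$j = cnj (A$j$i)) \<and>
     (\<forall>v :: complex^'d. 0 \<le> Re (\<Sum>i\<in>UNIV. \<Sum>j\<in>UNIV. cnj (v$i) * A$i$j * v$j))"

definition is_povm :: "'d::finite povm_data \<Rightarrow> bool" where
  "is_povm P \<longleftrightarrow> (\<forall>a < fst P. psd (snd P a)) \<and> (\<Sum>a < fst P. snd P a) = mat 1"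

definition depol :: "real \<Rightarrow> 'd::finite cmat \<Rightarrow> 'd cmat" where
  "depol t A = (\<chi> i j. complex_of_real t * A$i$j +
      (if i = j then complex_of_real ((1 - t) / real CARD('d)) * trace A else 0))"

definition depol_povm :: "real \<Rightarrow> 'd::finite povm_data \<Rightarrow> 'd povm_data" where
  "depol_povm t P = (fst P, \<lambda>a. depol t (snd P a))"

definition jointly_measurable :: "'d::finite povm_data \<Rightarrow> 'd povm_data \<Rightarrow> bool" where
  "jointly_measurable P Q \<longleftrightarrow> (\<exists>M :: nat \<Rightarrow> nat \<Rightarrow> 'd cmat.
     (\<forall>a < fst P. \<forall>b < fst Q. psd (M a b)) \<and>
     (\<forall>a < fst P. (\<Sum>b < fst Q. M a b) = snd P a) \<and>
     (\<forall>b < fst Q. (\<Sum>a < fst P. M a b) = snd Q b))"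

definition simulable :: "'d::finite povm_data \<Rightarrow> (nat \<Rightarrow> 'd povm_data) \<Rightarrow> nat \<Rightarrow> bool" where
  "simulable P B k \<longleftrightarrow> (\<exists>(p :: nat \<Rightarrow> real) (q :: nat \<Rightarrow> nat \<Rightarrow> nat \<Rightarrow> real).
     (\<forall>j < k. 0 \<le> p j) \<and> (\<Sum>j < k. p j) = 1 \<and>
     (\<forall>j < k. \<forall>i' < fst (B j). (\<forall>i < fst P. 0 \<le> q i j i') \<and> (\<Sum>i < fst P. q i j i') = 1) \<and>
     (\<forall>i < fst P. snd P i = (\<Sum>j < k. p j *\<^sub>R (\<Sum>i' < fst (B j). q i j i' *\<^sub>R snd (B j) i'))))"

end

theory Submission
  imports Defs
begin

text \<open>If the depolarised POVMs number l and l' are jointly measurable, their joint POVM M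
replaces both of them: each is a deterministic coarse-graining of M (forget one outcome),
and every other depolarised POVM simulates itself. Hence the m - 1 POVMs made of M and the
remaining depolarised POVMs simulate the whole depolarised family, so every t counted on the
left is counted on the right. The left-hand set is nonempty, since at t = 0 all effects are
multiples of the identity, and such POVMs are always jointly measurable.\<close>

definition quad_form :: "'d::finite cmat \<Rightarrow> complex^'d \<Rightarrow> complex" where
  "quad_form A v = (\<Sum>i\<in>UNIV. \<Sum>j\<in>UNIV. cnj (v$i) * A$i$j * v$j)"

lemma psd_iff: "psd A \<longleftrightarrow> (\<forall>i j. cnj (A$j$i) = A$i$j) \<and> (\<forall>v. 0 \<le> Re (quad_form A v))"
  unfolding psd_def quad_form_def by (metis complex_cnj_cnj)

lemma psd_hermitian: "psd A \<Longrightarrow> cnj (A$j$i) = A$i$j"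
  unfolding psd_iff by blast

lemma psd_quad_form_nonneg: "psd A \<Longrightarrow> 0 \<le> Re (quad_form A v)"
  unfolding psd_iff by blast

lemma quad_form_add: "quad_form (A + B) v = quad_form A v + quad_form B v"
  unfolding quad_form_def by (simp add: distrib_left distrib_right sum.distrib)

lemma quad_form_scaleR: "quad_form (s *\<^sub>R A) v = complex_of_real s * quad_form A v"
  unfolding quad_form_def
  by (simp add: scaleR_conv_of_real[where 'a=complex] sum_distrib_left mult.assoc mult.left_commute)

lemma quad_form_mat_1:
  "quad_form (mat 1) (v :: complex^'d::finite) = complex_of_real (\<Sum>i\<in>UNIV. (cmod (v$i))\<^sup>2)"
proof -
  have "cnj (v$i) * (mat 1 :: 'd cmat)$i$j * v$j = (if j = i then cnj (v$i) * v$i else 0)"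
    for i j :: 'd
    by (simp add: mat_def)
  then show ?thesis
    unfolding quad_form_def of_real_sum complex_norm_square by (simp add: mult.commute)
qed

lemma psd_add: "psd A \<Longrightarrow> psd B \<Longrightarrow> psd (A + B)"
  by (simp add: psd_iff quad_form_add)

lemma psd_scaleR: "psd A \<Longrightarrow> 0 \<le> s \<Longrightarrow> psd (s *\<^sub>R A)"
  by (simp add: psd_iff quad_form_scaleR scaleR_conv_of_real[where 'a=complex])

lemma psd_mat_1: "psd (mat 1)"
  by (simp add: psd_iff quad_form_mat_1 sum_nonneg) (simp add: mat_def)

lemma quad_form_axis: "quad_form A (axis i 1) = A$i$i"
proof -
  have "cnj (axis i 1 $ k) * A$k$l * axis i 1 $ l = (if l = i then if k = i then A$i$i else 0 else 0)"
    for k l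
    by (simp add: axis_def)
  then show ?thesis
    unfolding quad_form_def by (simp only: sum.delta finite UNIV_I if_True)
qed

lemma psd_trace_real: "psd A \<Longrightarrow> complex_of_real (Re (trace A)) = trace A"
  by (simp add: complex_is_Real_iff[symmetric] Reals_cnj_iff trace_def cnj_sum psd_hermitian)

lemma psd_trace_nonneg: "psd A \<Longrightarrow> 0 \<le> Re (trace A)"
  by (simp add: trace_def quad_form_axis[symmetric] Re_sum sum_nonneg psd_quad_form_nonneg)

lemma trace_sum: "trace (\<Sum>a\<in>S. f a :: 'd::finite cmat) = (\<Sum>a\<in>S. trace (f a))"
  by (induction S rule: infinite_finite_induct) (auto simp: trace_add trace_0[unfolded mat_0])

lemma depol_psd_eq:
  fixes A :: "'d::finite cmat"
  assumes "psd A"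
  shows "depol t A = t *\<^sub>R A + ((1 - t) / CARD('d) * Re (trace A)) *\<^sub>R mat 1"
proof -
  have "depol t A $ i $ j = (t *\<^sub>R A + ((1 - t) / CARD('d) * Re (trace A)) *\<^sub>R mat 1) $ i $ j" for i j
    using psd_trace_real[OF assms]
    by (auto simp: depol_def scaleR_conv_of_real[where 'a=complex] mat_def)
  then show ?thesis
    by (simp add: vec_eq_iff)
qed

lemma psd_depol:
  assumes "psd A" "0 \<le> t" "t \<le> 1"
  shows "psd (depol t A)"
  using assms psd_trace_nonneg[OF assms(1)]
  by (simp add: depol_psd_eq psd_add psd_scaleR psd_mat_1)

lemma depol_sum: "(\<Sum>a\<in>S. depol t (f a)) = depol t (\<Sum>a\<in>S. f a :: 'd::finite cmat)"
proof -
  have "(\<Sum>a\<in>S. depol t (f a)) $ i $ j = depol t (\<Sum>a\<in>S. f a) $ i $ j" for i j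
    by (cases "i = j") (simp_all add: depol_def sum_component sum.distrib sum_distrib_left trace_sum)
  then show ?thesis
    by (simp add: vec_eq_iff)
qed

lemma depol_mat_1: "depol t (mat 1 :: 'd::finite cmat) = mat 1"
  by (simp add: depol_psd_eq psd_mat_1 trace_I scaleR_add_left[symmetric])

lemma is_povm_depol_povm: "is_povm P \<Longrightarrow> 0 \<le> t \<Longrightarrow> t \<le> 1 \<Longrightarrow> is_povm (depol_povm t P)"
  by (simp add: is_povm_def depol_povm_def psd_depol depol_sum depol_mat_1)

lemma is_povm_outcomes_pos: "is_povm (P :: 'd::finite povm_data) \<Longrightarrow> 0 < fst P"
proof (rule ccontr)
  assume "is_povm P" "\<not> 0 < fst P"
  then have "(mat 1 :: 'd cmat) = 0"
    by (simp add: is_povm_def)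
  then have "(mat 1 :: 'd cmat) $ undefined $ undefined = 0"
    by simp
  then show False
    by (simp add: mat_def)
qed

lemma povm_trace_sum: "is_povm P \<Longrightarrow> (\<Sum>a<fst P. Re (trace (snd P a))) = real CARD('d)"
  for P :: "'d::finite povm_data"
  by (simp add: is_povm_def Re_sum[symmetric] trace_sum[symmetric] trace_I)

lemma sum_nat_div_mod:
  fixes g :: "nat \<Rightarrow> nat \<Rightarrow> 'a::comm_monoid_add"
  shows "(\<Sum>c < n * k. g (c div k) (c mod k)) = (\<Sum>a<n. \<Sum>b<k. g a b)"
proof -
  have "(\<Sum>c < n * k. g (c div k) (c mod k)) = (\<Sum>a<n. \<Sum>c\<in>{a * k..<a * k + k}. g (c div k) (c mod k))"
    by (rule sum.nat_group[symmetric])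
  also have "\<dots> = (\<Sum>a<n. \<Sum>b<k. g a b)"
  proof (rule sum.cong[OF refl])
    fix a
    have "(\<Sum>c\<in>{a * k..<a * k + k}. g (c div k) (c mod k))
        = (\<Sum>b\<in>{0..<k}. g ((b + a * k) div k) ((b + a * k) mod k))"
      using sum.shift_bounds_nat_ivl[of "\<lambda>c. g (c div k) (c mod k)" 0 "a * k" k]
      by (simp add: add.commute)
    also have "\<dots> = (\<Sum>b<k. g a b)"
      by (rule sum.cong) auto
    finally show "(\<Sum>c\<in>{a * k..<a * k + k}. g (c div k) (c mod k)) = (\<Sum>b<k. g a b)" .
  qed
  finally show ?thesis .
qed

text \<open>The members other than \<open>B j\<close> get weight zero, but still need a valid post-processing;
they are sent to outcome \<open>0\<close>.\<close>
lemma simulable_by_relabelling: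
  fixes P :: "'d::finite povm_data"
  assumes "j < k" "0 < fst P" "\<forall>c<fst (B j). h c < fst P"
    and "\<forall>i<fst P. snd P i = (\<Sum>c<fst (B j). if h c = i then snd (B j) c else 0)"
  shows "simulable P B k"
  unfolding simulable_def
proof (intro exI conjI allI impI)
  define p where "p j' = (if j' = j then 1 else 0 :: real)" for j'
  define q where "q i j' c = (if j' = j then if h c = i then 1 else 0 else if i = 0 then 1 else 0 :: real)"
    for i j' c
  show "0 \<le> p j'" "(\<Sum>j'<k. p j') = 1"
    for j' using assms(1) by (simp_all add: p_def)
  show "0 \<le> q i j' c" for i j' c
    by (simp add: q_def)
  show "(\<Sum>i<fst P. q i j' c) = 1" if "j' < k" "c < fst (B j')" for j' c
    using that assms(2,3) by (cases "j' = j") (simp_all add: q_def sum.delta sum.delta')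
  show "snd P i = (\<Sum>j'<k. p j' *\<^sub>R (\<Sum>c<fst (B j'). q i j' c *\<^sub>R snd (B j') c))"
    if "i < fst P" for i
    using that assms(1,4) by (simp add: p_def q_def if_distrib[of "\<lambda>x. x *\<^sub>R _"] sum.delta' cong: if_cong)
qed

lemma simulable_by_member:
  fixes P :: "'d::finite povm_data"
  assumes "is_povm P" "j < k" "B j = P"
  shows "simulable P B k"
proof (rule simulable_by_relabelling[where h = id])
  show "j < k" "0 < fst P"
    using assms is_povm_outcomes_pos by simp_all
  show "\<forall>c<fst (B j). id c < fst P"
    "\<forall>i<fst P. snd P i = (\<Sum>c<fst (B j). if id c = i then snd (B j) c else 0)"
    using assms(3) by (simp_all add: sum.delta')
qed

text \<open>The joint POVM, with the pair of outcomes \<open>(a, b)\<close> encoded as \<open>a * fst Q + b\<close>.\<close>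
lemma jointly_measurable_joint_povm:
  fixes P Q :: "'d::finite povm_data"
  assumes "is_povm P" "is_povm Q" "jointly_measurable P Q"
  obtains J where "is_povm J" "fst J = fst P * fst Q"
    "\<forall>a<fst P. snd P a = (\<Sum>c<fst J. if c div fst Q = a then snd J c else 0)"
    "\<forall>b<fst Q. snd Q b = (\<Sum>c<fst J. if c mod fst Q = b then snd J c else 0)"
proof -
  obtain M where M_psd: "\<forall>a<fst P. \<forall>b<fst Q. psd (M a b)"
    and M_P: "\<forall>a<fst P. (\<Sum>b<fst Q. M a b) = snd P a"
    and M_Q: "\<forall>b<fst Q. (\<Sum>a<fst P. M a b) = snd Q b"
    using assms(3) unfolding jointly_measurable_def by blast
  define n k where "n = fst P" and "k = fst Q"
  have "0 < k"
    unfolding k_def using is_povm_outcomes_pos[OF assms(2)] .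
  define J where "J = (n * k, \<lambda>c. M (c div k) (c mod k))"
  have sum_J: "(\<Sum>c<fst J. f (c div k) (c mod k) (snd J c)) = (\<Sum>a<n. \<Sum>b<k. f a b (M a b))" for f
    unfolding J_def using sum_nat_div_mod[of "\<lambda>a b. f a b (M a b)"] by simp
  have "is_povm J"
    unfolding is_povm_def
  proof (intro conjI allI impI)
    fix c assume "c < fst J"
    then have "c div k < n" "c mod k < k"
      using \<open>0 < k\<close> by (simp_all add: J_def less_mult_imp_div_less)
    then show "psd (snd J c)"
      using M_psd by (simp add: J_def n_def k_def)
  next
    show "(\<Sum>c<fst J. snd J c) = mat 1"
      using sum_J[of "\<lambda>_ _ X. X"] M_P assms(1) by (simp add: n_def k_def is_povm_def)
  qed
  moreover have "snd P a = (\<Sum>c<fst J. if c div k = a then snd J c else 0)" if "a < n" for a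
  proof -
    have "(\<Sum>b<k. if a' = a then M a' b else 0) = (if a' = a then \<Sum>b<k. M a' b else 0)" for a'
      by simp
    then show ?thesis
      using sum_J[of "\<lambda>a' _ X. if a' = a then X else 0"] M_P that
      by (simp add: sum.delta' n_def k_def)
  qed
  moreover have "snd Q b = (\<Sum>c<fst J. if c mod k = b then snd J c else 0)" if "b < k" for b
    using sum_J[of "\<lambda>_ b' X. if b' = b then X else 0"] M_Q that
    by (simp add: sum.delta' n_def k_def)
  moreover have "fst J = n * k"
    by (simp add: J_def)
  ultimately show ?thesis
    using that unfolding n_def k_def by blast
qed

lemma simulable_merging_jointly_measurable_pair:
  fixes P :: "nat \<Rightarrow> 'd::finite povm_data"
  assumes povms: "\<forall>i<m. is_povm (P i)" and "l < l'" "l' < m"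
    and "jointly_measurable (P l) (P l')"
  obtains B where "\<forall>j<m - 1. is_povm (B j)" "\<forall>i<m. simulable (P i) B (m - 1)"
proof -
  obtain J where "is_povm J" and J_size: "fst J = fst (P l) * fst (P l')"
    and J_div: "\<forall>a<fst (P l). snd (P l) a = (\<Sum>c<fst J. if c div fst (P l') = a then snd J c else 0)"
    and J_mod: "\<forall>b<fst (P l'). snd (P l') b = (\<Sum>c<fst J. if c mod fst (P l') = b then snd J c else 0)"
  proof (rule jointly_measurable_joint_povm)
    show "is_povm (P l)" "is_povm (P l')" "jointly_measurable (P l) (P l')"
      using povms assms by simp_all
  qed
  have pos: "0 < fst (P i)" if "i < m" for i
    using is_povm_outcomes_pos povms that by blast
  define B where "B j = (if j = l then J else P (if j < l' then j else Suc j))" for j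
  have "is_povm (B j)" if "j < m - 1" for j
    using \<open>is_povm J\<close> povms that by (simp add: B_def)
  moreover have "simulable (P i) B (m - 1)" if "i < m" for i
  proof -
    have "l < m - 1" "B l = J"
      using assms by (simp_all add: B_def)
    consider "i = l" | "i = l'" | "i \<noteq> l" "i \<noteq> l'"
      by blast
    then show ?thesis
    proof cases
      case 1
      show ?thesis
      proof (rule simulable_by_relabelling[where h = "\<lambda>c. c div fst (P l')"])
        show "\<forall>c<fst (B l). c div fst (P l') < fst (P i)"
          using 1 J_size pos assms \<open>B l = J\<close> by (simp add: less_mult_imp_div_less)
        show "\<forall>a<fst (P i). snd (P i) a
            = (\<Sum>c<fst (B l). if c div fst (P l') = a then snd (B l) c else 0)"
          using J_div unfolding 1 \<open>B l = J\<close> .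
      qed (use pos \<open>i < m\<close> \<open>l < m - 1\<close> in simp_all)
    next
      case 2
      show ?thesis
      proof (rule simulable_by_relabelling[where h = "\<lambda>c. c mod fst (P l')"])
        show "\<forall>c<fst (B l). c mod fst (P l') < fst (P i)"
          using 2 pos assms by simp
        show "\<forall>b<fst (P i). snd (P i) b
            = (\<Sum>c<fst (B l). if c mod fst (P l') = b then snd (B l) c else 0)"
          using J_mod unfolding 2 \<open>B l = J\<close> .
      qed (use pos \<open>i < m\<close> \<open>l < m - 1\<close> in simp_all)
    next
      case 3
      define j where "j = (if i < l' then i else i - 1)"
      have "j < m - 1" "B j = P i"
        using 3 assms \<open>i < m\<close> by (auto simp: j_def B_def)
      then show ?thesis
        using simulable_by_member povms \<open>i < m\<close> by blast
    qed
  qed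
  ultimately show ?thesis
    using that by blast
qed

text \<open>At \<open>t = 0\<close> every effect \<open>X\<close> becomes \<open>\<tau> X *\<^sub>R mat 1\<close>, so the products
\<open>\<tau> (P a) * \<tau> (Q b)\<close> of these weights give a joint POVM.\<close>
lemma jointly_measurable_depol_zero:
  fixes P Q :: "'d::finite povm_data"
  assumes "is_povm P" "is_povm Q"
  shows "jointly_measurable (depol_povm 0 P) (depol_povm 0 Q)"
proof -
  define \<tau> :: "'d cmat \<Rightarrow> real" where "\<tau> X = Re (trace X) / CARD('d)" for X
  have depol_0: "depol 0 X = \<tau> X *\<^sub>R mat 1" if "psd X" for X
    using that by (simp add: depol_psd_eq \<tau>_def)
  have \<tau>_nonneg: "0 \<le> \<tau> X" if "psd X" for X
    using psd_trace_nonneg[OF that] by (simp add: \<tau>_def)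
  have \<tau>_sum: "(\<Sum>a<fst R. \<tau> (snd R a)) = 1" if "is_povm R" for R
    using povm_trace_sum[OF that] by (simp add: \<tau>_def flip: sum_divide_distrib)
  define M :: "nat \<Rightarrow> nat \<Rightarrow> 'd cmat"
    where "M a b = (\<tau> (snd P a) * \<tau> (snd Q b)) *\<^sub>R mat 1" for a b
  show ?thesis
    unfolding jointly_measurable_def depol_povm_def fst_conv snd_conv
  proof (intro exI[of _ M] conjI allI impI)
    show "psd (M a b)" if "a < fst P" "b < fst Q" for a b
      using assms that \<tau>_nonneg
      by (simp add: M_def is_povm_def psd_scaleR psd_mat_1)
    show "(\<Sum>b<fst Q. M a b) = depol 0 (snd P a)" if "a < fst P" for a
      using assms that \<tau>_sum[OF assms(2)]
      by (simp add: M_def depol_0 is_povm_def flip: scaleR_sum_left sum_distrib_left)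
    show "(\<Sum>a<fst P. M a b) = depol 0 (snd Q b)" if "b < fst Q" for b
      using assms that \<tau>_sum[OF assms(1)]
      by (simp add: M_def depol_0 is_povm_def flip: scaleR_sum_left sum_distrib_right)
  qed
qed

theorem mainTheorem11:
  fixes m :: nat and A :: "nat \<Rightarrow> 'd::finite povm_data"
  assumes "m \<ge> 2"
    and "\<forall>l < m. is_povm (A l)"
  shows "Sup {t \<in> {0..1}. \<exists>l l'. l < l' \<and> l' < m \<and>
              jointly_measurable (depol_povm t (A l)) (depol_povm t (A l'))}
         \<le> Sup {t \<in> {0..1}. \<exists>k \<le> m - 1. \<exists>B :: nat \<Rightarrow> 'd povm_data.
              (\<forall>j < k. is_povm (B j)) \<and> (\<forall>l < m. simulable (depol_povm t (A l)) B k)}"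
    (is "Sup ?L \<le> Sup ?R")
proof (rule cSup_subset_mono)
  have "jointly_measurable (depol_povm 0 (A 0)) (depol_povm 0 (A 1))"
    using assms by (simp add: jointly_measurable_depol_zero)
  then have "0 \<in> ?L"
    using assms(1) by force
  then show "?L \<noteq> {}"
    by blast
  show "bdd_above ?R"
    by (rule bdd_aboveI[of _ 1]) auto
  show "?L \<subseteq> ?R"
  proof
    fix t assume "t \<in> ?L"
    then obtain l l' where t: "0 \<le> t" "t \<le> 1" and "l < l'" "l' < m"
      and "jointly_measurable (depol_povm t (A l)) (depol_povm t (A l'))"
      by auto
    moreover have "\<forall>i<m. is_povm (depol_povm t (A i))"
      using assms(2) t by (simp add: is_povm_depol_povm)
    ultimately obtain B where "\<forall>j<m - 1. is_povm (B j)"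
      and "\<forall>i<m. simulable (depol_povm t (A i)) B (m - 1)"
      using simulable_merging_jointly_measurable_pair[of m "\<lambda>i. depol_povm t (A i)" l l'] by blast
    then show "t \<in> ?R"
      using t by auto
  qed
qed

end
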